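(* Let $\lambda$ be a singular cardinal of cofinality $\kappa$ and $\vec\lambda=\langle\lambda_i:i<\kappa\rangle$ a strictly increasing sequence of regular cardinals converging to $\lambda$. Then $\mathbb G(\vec\lambda)$ is $(\lambda+1)$-strategically closed.
   Context: For $f,g:\kappa\to\mathrm{ON}$, $f<^*g$ means there is $j<\kappa$ with $f(i)<g(i)$ for all $i\ge j$. Given a $<^*$-increasing sequence $\langle f_\gamma:\gamma<\beta\rangle$ in $\prod_{i<\kappa}\lambda_i$, $\beta$ is a good point if there are an unbounded $A\subseteq\beta$ of order type $\mathrm{cf}(\beta)$ and $j<\kappa$ such that for all $i\ge j$, $\langle f_\gamma(i):\gamma\in A\rangle$ is strictly increasing. $\mathbb G(\vec\lambda)$ consists of sequences $\langle f_\beta:\beta\le\alpha\rangle$ with $\alpha<\lambda^+$ such that for all $\beta\le\alpha$: $f_\beta\in\prod_{i<\kappa}\lambda_i$; $f_\gamma<^*f_\beta$ for all $\gamma<\beta$; and if $\mathrm{cf}(\beta)>\kappa$ then $\beta$ is a good point of $\langle f_\gamma:\gamma<\beta\rangle$. Order is end-extension. A poset is $(\lambda+1)$-strategically closed if in the game of length $\lambda+1$ in which two players alternately choose a decreasing sequence of conditions $\langle p_\xi:\xi\le\lambda\rangle$, with Player II choosing at even stages (including all limit stages and stage $0$), Player II has a strategy guaranteeing that she can make a legal move at every stage $\xi\le\lambda$. *)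

theory Defs
  imports Main "HOL-Library.Equipollence"
begin

text \<open>Ordinals are modelled as elements of an arbitrary well-ordered type 'o;
  the ordinal represented by a is the order type of the initial segment below a.\<close>

definition is_cardinal :: "'o::wellorder \<Rightarrow> bool" where
  "is_cardinal a \<longleftrightarrow> (\<forall>b<a. \<not> ({..<b} \<approx> {..<a}))"

definition cofinal_in :: "'o::wellorder set \<Rightarrow> 'o \<Rightarrow> bool" where
  "cofinal_in A b \<longleftrightarrow> A \<subseteq> {..<b} \<and> (\<forall>x<b. \<exists>a\<in>A. x \<le> a)"

definition cof :: "'o::wellorder \<Rightarrow> 'o" where
  "cof b = (LEAST g. \<exists>A. cofinal_in A b \<and> A \<approx> {..<g})"

definition regular_card :: "'o::wellorder \<Rightarrow> bool" where
  "regular_card a \<longleftrightarrow> is_cardinal a \<and> infinite {..<a} \<and> cof a = a"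

definition singular_card :: "'o::wellorder \<Rightarrow> bool" where
  "singular_card a \<longleftrightarrow> is_cardinal a \<and> infinite {..<a} \<and> cof a < a"

definition has_otype :: "'o::wellorder set \<Rightarrow> 'o \<Rightarrow> bool" where
  "has_otype A g \<longleftrightarrow> (\<exists>h. bij_betw h {..<g} A \<and> strict_mono_on {..<g} h)"

definition eventually_less :: "'o::wellorder \<Rightarrow> ('o \<Rightarrow> 'o) \<Rightarrow> ('o \<Rightarrow> 'o) \<Rightarrow> bool" where
  "eventually_less \<kappa> f g \<longleftrightarrow> (\<exists>j<\<kappa>. \<forall>i. j \<le> i \<and> i < \<kappa> \<longrightarrow> f i < g i)"

definition good_point :: "'o::wellorder \<Rightarrow> ('o \<Rightarrow> 'o \<Rightarrow> 'o) \<Rightarrow> 'o \<Rightarrow> bool" where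
  "good_point \<kappa> F b \<longleftrightarrow> (\<exists>A. cofinal_in A b \<and> has_otype A (cof b) \<and>
     (\<exists>j<\<kappa>. \<forall>i. j \<le> i \<and> i < \<kappa> \<longrightarrow> strict_mono_on A (\<lambda>g. F g i)))"

text \<open>A condition is a pair (alpha, F) standing for the sequence F beta (beta \<le> alpha);
  alpha < lambda^+ is expressed as |alpha| \<le> lambda.\<close>
type_synonym 'o cond = "'o \<times> ('o \<Rightarrow> 'o \<Rightarrow> 'o)"

definition G_set :: "'o::wellorder \<Rightarrow> 'o \<Rightarrow> ('o \<Rightarrow> 'o) \<Rightarrow> 'o cond set" where
  "G_set lam \<kappa> ls = {(\<alpha>, F). {..<\<alpha>} \<lesssim> {..<lam} \<and>
      (\<forall>b\<le>\<alpha>. (\<forall>i<\<kappa>. F b i < ls i) \<and>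
               (\<forall>g<b. eventually_less \<kappa> (F g) (F b)) \<and>
               (\<kappa> < cof b \<longrightarrow> good_point \<kappa> F b))}"

text \<open>G_ext \<kappa> q p: q end-extends p (q is stronger)\<close>
definition G_ext :: "'o::wellorder \<Rightarrow> 'o cond \<Rightarrow> 'o cond \<Rightarrow> bool" where
  "G_ext \<kappa> q p \<longleftrightarrow> fst p \<le> fst q \<and> (\<forall>b\<le>fst p. \<forall>i<\<kappa>. snd q b i = snd p b i)"

definition is_succ_of :: "'o::wellorder \<Rightarrow> 'o \<Rightarrow> bool" where
  "is_succ_of a b \<longleftrightarrow> a < b \<and> (\<forall>x. a < x \<longrightarrow> b \<le> x)"

text \<open>even ordinals: limit (or zero) plus an even natural number\<close>
inductive even_ord :: "'o::wellorder \<Rightarrow> bool" where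
  lim: "\<not> (\<exists>a. is_succ_of a b) \<Longrightarrow> even_ord b"
| ss: "is_succ_of c a \<Longrightarrow> is_succ_of a b \<Longrightarrow> even_ord c \<Longrightarrow> even_ord b"

definition restr :: "('o::wellorder \<Rightarrow> 'c) \<Rightarrow> 'o \<Rightarrow> 'o \<Rightarrow> 'c" where
  "restr p x = (\<lambda>z. if z < x then p z else undefined)"

text \<open>(len+1)-strategic closedness of (P, ext): Player II (even stages, including
  0 and limits) has a strategy, depending on the history and the stage, such that in
  every play following it and in which all earlier moves are legal, her move at each
  even stage xi \<le> len is legal.\<close>
definition strat_closed :: "'o::wellorder \<Rightarrow> 'c set \<Rightarrow> ('c \<Rightarrow> 'c \<Rightarrow> bool) \<Rightarrow> bool" where
  "strat_closed len P ext \<longleftrightarrow> (\<exists>\<sigma> :: ('o \<Rightarrow> 'c) \<Rightarrow> 'o \<Rightarrow> 'c.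
     \<forall>p \<xi>. \<xi> \<le> len \<and> even_ord \<xi> \<and>
        (\<forall>\<eta><\<xi>. p \<eta> \<in> P \<and> (\<forall>\<zeta><\<eta>. ext (p \<eta>) (p \<zeta>))) \<and>
        (\<forall>\<eta><\<xi>. even_ord \<eta> \<longrightarrow> p \<eta> = \<sigma> (restr p \<eta>) \<eta>)
      \<longrightarrow> \<sigma> (restr p \<xi>) \<xi> \<in> P \<and> (\<forall>\<eta><\<xi>. ext (\<sigma> (restr p \<xi>) \<xi>) (p \<eta>)))"

end

theory Submission
  imports Defs
begin

text \<open>Player II always plays a condition whose top function lies, at every coordinate i,
  above the top functions of all previous moves, as long as these are bounded in ls i. By
  regularity of ls i this is the case whenever ls i exceeds the cardinality of the stage, so
  at stages below lam it holds on a tail of coordinates. At a limit stage she plays the union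
  of the previous conditions topped by such a bound. If the new length has cofinality above
  kappa, the stage is below lam, and the lengths reached at her successor moves form a cofinal
  set along which the top functions increase on a tail: a good point. At stage lam itself the
  new length has cofinality at most kappa, and a bound over the kappa stages of a cofinal
  sequence in lam suffices.\<close>

section \<open>Order types and cofinality\<close>

lemma insert_lepoll_infinite:
  assumes "A \<lesssim> L" "infinite L"
  shows "insert a A \<lesssim> L"
proof (cases "finite A")
  case True
  then show ?thesis using assms finite_lepoll_infinite by blast
next
  case False
  then have "insert a A \<lesssim> A" by (rule infinite_insert_lepoll)
  then show ?thesis using assms(1) lepoll_trans by blast
qed

lemma UN_lepoll_infinite:
  assumes "I \<lesssim> L" "\<And>x. x \<in> I \<Longrightarrow> B x \<lesssim> L" "infinite L"
  shows "(\<Union>x\<in>I. B x) \<lesssim> L"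
proof -
  obtain h where h: "I \<subseteq> h ` L" using assms(1) lepoll_iff by metis
  have "\<forall>x\<in>I. \<exists>g. B x \<subseteq> g ` L" using assms(2) lepoll_iff by metis
  then obtain g where g: "\<And>x. x \<in> I \<Longrightarrow> B x \<subseteq> g x ` L" by metis
  have "(\<Union>x\<in>I. B x) \<subseteq> (\<lambda>(a, b). g (h a) b) ` (L \<times> L)"
  proof
    fix z assume "z \<in> (\<Union>x\<in>I. B x)"
    then obtain x where x: "x \<in> I" "z \<in> B x" by auto
    then obtain a where a: "a \<in> L" "x = h a" using h by auto
    obtain b where "b \<in> L" "z = g x b" using g x by blast
    then show "z \<in> (\<lambda>(a, b). g (h a) b) ` (L \<times> L)"
      using a by (auto intro!: image_eqI[where x="(a, b)"])
  qed
  then have "(\<Union>x\<in>I. B x) \<lesssim> L \<times> L" by (rule subset_image_lepoll)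
  also have "L \<times> L \<lesssim> L"
    using card_of_Times_same_infinite[OF assms(3)] eqpoll_iff_card_of_ordIso eqpoll_imp_lepoll
    by blast
  finally show ?thesis .
qed

lemma is_cardinal_not_lepoll_less:
  fixes a b :: "'o::wellorder"
  assumes "is_cardinal a" "b < a"
  shows "\<not> {..<a} \<lesssim> {..<b}"
proof
  assume "{..<a} \<lesssim> {..<b}"
  moreover have "{..<b} \<lesssim> {..<a}" using assms(2) by (intro subset_imp_lepoll) auto
  ultimately have "{..<b} \<approx> {..<a}" by (simp add: lepoll_antisym)
  then show False using assms unfolding is_cardinal_def by blast
qed

lemma infinite_cardinal_limit:
  fixes a y :: "'o::wellorder"
  assumes "is_cardinal a" "infinite {..<a}" "y < a"
  shows "\<exists>x. y < x \<and> x < a"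
proof (rule ccontr)
  assume "\<not> ?thesis"
  then have eq: "{..<a} = insert y {..<y}"
    using assms(3) by (auto simp: not_less) (metis leD le_less)
  then have "infinite {..<y}" using assms(2) by auto
  then have "insert y {..<y} \<approx> {..<y}" by (rule infinite_insert_eqpoll)
  then have "{..<a} \<lesssim> {..<y}" using eq by (simp add: eqpoll_imp_lepoll)
  then show False using is_cardinal_not_lepoll_less assms by blast
qed

lemma strict_mono_on_atMost_ge:
  fixes e :: "'o::wellorder \<Rightarrow> 'o"
  assumes "strict_mono_on {..t} e" "\<nu> \<le> t"
  shows "\<nu> \<le> e \<nu>"
  using assms(2)
proof (induction \<nu> rule: less_induct)
  case (less \<nu>)
  show ?case
  proof (rule ccontr)
    assume "\<not> \<nu> \<le> e \<nu>"
    then have lt: "e \<nu> < \<nu>" by simp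
    then have "e (e \<nu>) < e \<nu>" using assms(1) less.prems by (auto simp: strict_mono_on_def)
    moreover have "e \<nu> \<le> e (e \<nu>)" using less.IH[OF lt] lt less.prems by simp
    ultimately show False by simp
  qed
qed

definition ord_enum :: "'o::wellorder set \<Rightarrow> 'o \<Rightarrow> 'o" where
  "ord_enum R = wfrec {(x, y). x < y} (\<lambda>e \<nu>. LEAST r. r \<in> R \<and> (\<forall>\<nu>'<\<nu>. e \<nu>' < r))"

lemma ord_enum_eq: "ord_enum R \<nu> = (LEAST r. r \<in> R \<and> (\<forall>\<nu>'<\<nu>. ord_enum R \<nu>' < r))"
proof -
  have "ord_enum R \<nu> = (LEAST r. r \<in> R \<and> (\<forall>\<nu>'<\<nu>. cut (ord_enum R) {(x, y). x < y} \<nu> \<nu>' < r))"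
    unfolding ord_enum_def by (subst wfrec[OF wf]) simp
  then show ?thesis by (simp add: cut_apply)
qed

lemma ord_enum_in:
  assumes "r \<in> R" "\<forall>\<nu>'<\<nu>. ord_enum R \<nu>' < r"
  shows "ord_enum R \<nu> \<in> R \<and> (\<forall>\<nu>'<\<nu>. ord_enum R \<nu>' < ord_enum R \<nu>)"
  unfolding ord_enum_eq[of R \<nu>] by (rule LeastI[of _ r]) (use assms in blast)

lemma ord_enum_le:
  assumes "r \<in> R" "\<forall>\<nu>'<\<nu>. ord_enum R \<nu>' < r"
  shows "ord_enum R \<nu> \<le> r"
  unfolding ord_enum_eq[of R \<nu>] by (rule Least_le) (use assms in blast)

lemma ord_enum_below:
  assumes "r \<in> R" "r \<notin> ord_enum R ` {..<g}" "\<nu> < g"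
  shows "ord_enum R \<nu> < r"
  using assms(3)
proof (induction \<nu> rule: less_induct)
  case (less \<nu>)
  then have "ord_enum R \<nu> \<le> r" using assms(1) by (intro ord_enum_le) auto
  moreover have "ord_enum R \<nu> \<noteq> r" using assms(2) less.prems by auto
  ultimately show ?case by simp
qed

lemma has_otype_le:
  fixes R :: "'o::wellorder set"
  assumes "R \<subseteq> {..<\<theta>}"
  shows "\<exists>g\<le>\<theta>. has_otype R g"
proof -
  let ?e = "ord_enum R"
  define P where "P \<nu> \<longleftrightarrow> (\<exists>r\<in>R. \<forall>\<nu>'<\<nu>. ?e \<nu>' < r)" for \<nu>
  have PE: "?e \<nu> \<in> R \<and> (\<forall>\<nu>'<\<nu>. ?e \<nu>' < ?e \<nu>)" if "P \<nu>" for \<nu>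
    using that ord_enum_in unfolding P_def by blast
  have "\<not> P \<theta>"
  proof
    assume "P \<theta>"
    then have "P \<nu>" if "\<nu> \<le> \<theta>" for \<nu>
      using that unfolding P_def by (meson order_less_le_trans)
    then have "strict_mono_on {..\<theta>} ?e" using PE by (auto simp: strict_mono_on_def)
    then have "\<theta> \<le> ?e \<theta>" using strict_mono_on_atMost_ge by blast
    moreover have "?e \<theta> < \<theta>" using PE[OF \<open>P \<theta>\<close>] assms by auto
    ultimately show False by simp
  qed
  define g where "g = (LEAST \<nu>. \<not> P \<nu>)"
  have "\<not> P g" unfolding g_def using \<open>\<not> P \<theta>\<close> by (rule LeastI)
  have "g \<le> \<theta>" unfolding g_def using \<open>\<not> P \<theta>\<close> by (rule Least_le)
  have Pg: "P \<nu>" if "\<nu> < g" for \<nu> using that not_less_Least unfolding g_def by blast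
  have mono: "strict_mono_on {..<g} ?e" using PE Pg by (auto simp: strict_mono_on_def)
  have "R \<subseteq> ?e ` {..<g}"
  proof
    fix r assume r: "r \<in> R"
    show "r \<in> ?e ` {..<g}"
    proof (rule ccontr)
      assume "r \<notin> ?e ` {..<g}"
      then have "P g" unfolding P_def using r ord_enum_below by blast
      then show False using \<open>\<not> P g\<close> by simp
    qed
  qed
  then have "bij_betw ?e {..<g} R"
    unfolding bij_betw_def using strict_mono_on_imp_inj_on[OF mono] PE Pg by auto
  then show ?thesis using mono \<open>g \<le> \<theta>\<close> unfolding has_otype_def by blast
qed

lemma has_otype_eqpoll: "has_otype A g \<Longrightarrow> A \<approx> {..<g}"
  unfolding has_otype_def by (metis eqpoll_def eqpoll_sym)

lemma has_otype_image:
  assumes "has_otype R g" "strict_mono_on R h"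
  shows "has_otype (h ` R) g"
proof -
  obtain e where e: "bij_betw e {..<g} R" "strict_mono_on {..<g} e"
    using assms(1) unfolding has_otype_def by blast
  have "bij_betw (h \<circ> e) {..<g} (h ` R)"
    by (rule bij_betw_trans[OF e(1)])
      (rule inj_on_imp_bij_betw[OF strict_mono_on_imp_inj_on[OF assms(2)]])
  moreover have "strict_mono_on {..<g} (h \<circ> e)"
  proof (rule strict_mono_onI)
    fix r s assume "r \<in> {..<g}" "s \<in> {..<g}" "r < s"
    then have "e r < e s" "e r \<in> R" "e s \<in> R"
      using e unfolding strict_mono_on_def bij_betw_def by auto
    then show "(h \<circ> e) r < (h \<circ> e) s" using assms(2) unfolding strict_mono_on_def by auto
  qed
  ultimately show ?thesis unfolding has_otype_def by blast
qed

lemma cofinal_in_cof: "\<exists>A. cofinal_in A b \<and> A \<approx> {..<cof b}"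
proof -
  have "\<exists>A. cofinal_in A b \<and> A \<approx> {..<b}"
    by (rule exI[of _ "{..<b}"]) (auto simp: cofinal_in_def)
  then show ?thesis unfolding cof_def by (rule LeastI)
qed

lemma cof_le: "cofinal_in A b \<Longrightarrow> A \<approx> {..<g} \<Longrightarrow> cof b \<le> g"
  unfolding cof_def by (rule Least_le) blast

lemma is_cardinal_cof: "is_cardinal (cof b)"
  unfolding is_cardinal_def
proof (intro allI impI notI)
  fix g assume g: "g < cof b" "{..<g} \<approx> {..<cof b}"
  obtain A where A: "cofinal_in A b" "A \<approx> {..<cof b}" using cofinal_in_cof by blast
  have "A \<approx> {..<g}" using eqpoll_trans[OF A(2) eqpoll_sym[OF g(2)]] .
  then have "cof b \<le> g" using A(1) cof_le by blast
  then show False using g by simp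
qed

lemma cof_lepoll:
  assumes "cofinal_in C b" "C \<lesssim> X"
  shows "{..<cof b} \<lesssim> X"
proof -
  have "C \<subseteq> {..<b}" using assms(1) by (simp add: cofinal_in_def)
  then obtain g where "has_otype C g" using has_otype_le by blast
  then have "C \<approx> {..<g}" by (rule has_otype_eqpoll)
  then have "cof b \<le> g" using assms(1) cof_le by blast
  then have "{..<cof b} \<lesssim> {..<g}" by (intro subset_imp_lepoll) auto
  also have "{..<g} \<lesssim> C" using \<open>C \<approx> {..<g}\<close> by (simp add: eqpoll_imp_lepoll eqpoll_sym)
  also have "C \<lesssim> X" by fact
  finally show ?thesis .
qed

lemma cof_le_of_cofinal_lepoll:
  assumes "cofinal_in C b" "C \<lesssim> {..<k}"
  shows "cof b \<le> k"
  using cof_lepoll[OF assms] is_cardinal_not_lepoll_less[OF is_cardinal_cof] not_le by blast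

lemma records_cofinal:
  fixes h :: "'o::wellorder \<Rightarrow> 'o"
  assumes "\<nu> < \<theta>" "x \<le> h \<nu>"
  shows "\<exists>\<rho>\<in>{\<rho>. \<rho> < \<theta> \<and> (\<forall>\<rho>'<\<rho>. h \<rho>' < h \<rho>)}. x \<le> h \<rho>"
proof -
  define \<rho> where "\<rho> = (LEAST \<rho>. \<rho> < \<theta> \<and> x \<le> h \<rho>)"
  have \<rho>: "\<rho> < \<theta> \<and> x \<le> h \<rho>" unfolding \<rho>_def using assms by (intro LeastI) auto
  have "h \<rho>' < h \<rho>" if "\<rho>' < \<rho>" for \<rho>'
    using not_less_Least[OF that[unfolded \<rho>_def]] \<rho> that by auto
  then show ?thesis using \<rho> by blast
qed

lemma cofinal_subset_has_otype_cof:
  assumes "cofinal_in A' b"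
  shows "\<exists>A\<subseteq>A'. cofinal_in A b \<and> has_otype A (cof b)"
proof -
  define \<theta> where "\<theta> = cof b"
  obtain B where B: "cofinal_in B b" "B \<approx> {..<\<theta>}" using cofinal_in_cof unfolding \<theta>_def by blast
  obtain \<phi> where \<phi>: "bij_betw \<phi> {..<\<theta>} B" using eqpoll_sym[OF B(2)] unfolding eqpoll_def by blast
  have "\<forall>y\<in>B. \<exists>c. c \<in> A' \<and> y \<le> c"
  proof
    fix y assume "y \<in> B"
    then have "y < b" using B(1) unfolding cofinal_in_def by blast
    then show "\<exists>c. c \<in> A' \<and> y \<le> c" using assms unfolding cofinal_in_def by blast
  qed
  then obtain c where c: "\<And>y. y \<in> B \<Longrightarrow> c y \<in> A' \<and> y \<le> c y" by metis
  define h where "h \<nu> = c (\<phi> \<nu>)" for \<nu>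
  have hA: "h \<nu> \<in> A'" "\<phi> \<nu> \<le> h \<nu>" if "\<nu> < \<theta>" for \<nu>
    using c \<phi> that unfolding h_def bij_betw_def by auto
  \<comment> \<open>the records of h: h increases strictly on R, and h ` R is still cofinal\<close>
  define R where "R = {\<rho>. \<rho> < \<theta> \<and> (\<forall>\<rho>'<\<rho>. h \<rho>' < h \<rho>)}"
  obtain g where g: "g \<le> \<theta>" "has_otype R g" using has_otype_le[of R \<theta>] unfolding R_def by auto
  have "strict_mono_on R h" unfolding R_def strict_mono_on_def by auto
  with g(2) have D: "has_otype (h ` R) g" by (rule has_otype_image)
  have DA: "h ` R \<subseteq> A'" unfolding R_def using hA by auto
  have cofD: "cofinal_in (h ` R) b"
    unfolding cofinal_in_def
  proof (intro conjI allI impI)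
    show "h ` R \<subseteq> {..<b}" using DA assms by (auto simp: cofinal_in_def)
    fix x assume "x < b"
    then obtain y where "y \<in> B" "x \<le> y" using B(1) by (auto simp: cofinal_in_def)
    moreover obtain \<nu> where "\<nu> < \<theta>" "y = \<phi> \<nu>"
      using \<phi> \<open>y \<in> B\<close> unfolding bij_betw_def by auto
    ultimately have "x \<le> h \<nu>" using hA(2) order_trans by blast
    then obtain \<rho> where "\<rho> \<in> R" "x \<le> h \<rho>"
      using records_cofinal[OF \<open>\<nu> < \<theta>\<close>] unfolding R_def by blast
    then show "\<exists>a\<in>h ` R. x \<le> a" by blast
  qed
  have "\<theta> \<le> g" using cof_le[OF cofD has_otype_eqpoll[OF D]] unfolding \<theta>_def .
  with g(1) have "g = cof b" unfolding \<theta>_def by simp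
  then show ?thesis using DA cofD D by blast
qed

lemma ex_cofinal_map_cof:
  fixes b :: "'o::wellorder"
  shows "\<exists>c. (\<forall>\<eta><b. \<exists>i<cof b. \<eta> \<le> c i) \<and> (\<forall>i<cof b. c i < b)"
proof -
  obtain A where A: "cofinal_in A b" "A \<approx> {..<cof b}" using cofinal_in_cof by blast
  then obtain c where c: "bij_betw c {..<cof b} A" using eqpoll_sym unfolding eqpoll_def by blast
  have "\<exists>i<cof b. \<eta> \<le> c i" if "\<eta> < b" for \<eta>
  proof -
    obtain a where "a \<in> A" "\<eta> \<le> a" using A(1) \<open>\<eta> < b\<close> unfolding cofinal_in_def by blast
    moreover obtain i where "i < cof b" "a = c i" using c \<open>a \<in> A\<close> unfolding bij_betw_def by auto
    ultimately show ?thesis by blast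
  qed
  moreover have "c i < b" if "i < cof b" for i
    using c A(1) that unfolding bij_betw_def cofinal_in_def by auto
  ultimately show ?thesis by blast
qed

definition bounded_in :: "'o::wellorder \<Rightarrow> 'o set \<Rightarrow> bool" where
  "bounded_in L X \<longleftrightarrow> (\<exists>x<L. \<forall>v\<in>X. v < x)"

text \<open>ssup {} is the least element of the type; ssup X is unspecified if X has no strict
  upper bound at all.\<close>
definition ssup :: "'o::wellorder set \<Rightarrow> 'o" where
  "ssup X = (LEAST x. \<forall>v\<in>X. v < x)"

lemma ssup_bounded_in: "bounded_in L X \<Longrightarrow> ssup X < L \<and> (\<forall>v\<in>X. v < ssup X)"
  unfolding bounded_in_def ssup_def
proof (elim exE conjE)
  fix x assume x: "x < L" "\<forall>v\<in>X. v < x"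
  have "\<forall>v\<in>X. v < (LEAST x. \<forall>v\<in>X. v < x)" using x(2) by (rule LeastI)
  moreover have "(LEAST x. \<forall>v\<in>X. v < x) \<le> x" using x(2) by (rule Least_le)
  ultimately show "(LEAST x. \<forall>v\<in>X. v < x) < L \<and> (\<forall>v\<in>X. v < (LEAST x. \<forall>v\<in>X. v < x))"
    using x(1) by auto
qed

lemma regular_card_bounded_in:
  fixes L :: "'o::wellorder"
  assumes "regular_card L" "S \<subseteq> {..<L}" "\<not> {..<L} \<lesssim> S"
  shows "bounded_in L S"
proof (rule ccontr)
  assume "\<not> ?thesis"
  then have "cofinal_in S L"
    using assms(2) unfolding bounded_in_def cofinal_in_def by (meson not_less)
  then have "{..<cof L} \<lesssim> S" using cof_lepoll by blast
  then show False using assms(1,3) by (simp add: regular_card_def)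
qed

section \<open>Successors and even ordinals\<close>

definition osucc :: "'o::wellorder \<Rightarrow> 'o" where
  "osucc x = (LEAST y. x < y)"

lemma osucc_bounds: "x < y \<Longrightarrow> x < osucc x \<and> osucc x \<le> y"
  unfolding osucc_def by (metis LeastI Least_le)

lemma is_succ_of_osucc: "x < y \<Longrightarrow> is_succ_of x (osucc x)"
  unfolding is_succ_of_def using osucc_bounds by blast

lemma is_succ_of_eq_osucc: "is_succ_of a b \<Longrightarrow> b = osucc a"
  unfolding is_succ_of_def using osucc_bounds by (metis antisym)

lemma is_succ_of_less_le: "is_succ_of a b \<Longrightarrow> x < b \<Longrightarrow> x \<le> a"
  unfolding is_succ_of_def using not_less by blast

lemma is_succ_of_unique: "is_succ_of a b \<Longrightarrow> is_succ_of a' b \<Longrightarrow> a = a'"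
  unfolding is_succ_of_def by (meson not_less order_antisym)

lemma even_ord_or_even_ord_osucc: "c < (y::'o::wellorder) \<Longrightarrow> even_ord c \<or> even_ord (osucc c)"
proof (induction c arbitrary: y rule: less_induct)
  case (less c)
  show ?case
  proof (cases "\<exists>a. is_succ_of a c")
    case False
    then show ?thesis by (blast intro: even_ord.lim)
  next
    case True
    then obtain d where d: "is_succ_of d c" by blast
    then have dc: "d < c" "c = osucc d" using is_succ_of_eq_osucc unfolding is_succ_of_def by auto
    show ?thesis
    proof (cases "even_ord d")
      case True
      then have "even_ord (osucc c)"
        using d is_succ_of_osucc[OF less.prems] by (blast intro: even_ord.ss)
      then show ?thesis by blast
    next
      case False
      then show ?thesis using less.IH[OF dc(1) dc(1)] dc(2) by blast
    qed
  qed
qed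

lemma even_successor_between:
  fixes \<xi> :: "'o::wellorder"
  assumes "\<not> (\<exists>a. is_succ_of a \<xi>)" "\<eta> < \<xi>"
  shows "\<exists>\<zeta>. \<eta> \<le> \<zeta> \<and> \<zeta> < \<xi> \<and> even_ord \<zeta> \<and> (\<exists>a. is_succ_of a \<zeta>)"
proof -
  have s1: "is_succ_of \<eta> (osucc \<eta>)" using is_succ_of_osucc[OF assms(2)] .
  have l1: "osucc \<eta> < \<xi>" using osucc_bounds[OF assms(2)] s1 assms(1) by (metis order_le_less)
  have s2: "is_succ_of (osucc \<eta>) (osucc (osucc \<eta>))" using is_succ_of_osucc[OF l1] .
  have l2: "osucc (osucc \<eta>) < \<xi>" using osucc_bounds[OF l1] s2 assms(1) by (metis order_le_less)
  have e1: "\<eta> \<le> osucc \<eta>" "\<eta> \<le> osucc (osucc \<eta>)" using s1 s2 unfolding is_succ_of_def by auto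
  show ?thesis
  proof (cases "even_ord \<eta>")
    case True
    then have "even_ord (osucc (osucc \<eta>))" using s1 s2 by (blast intro: even_ord.ss)
    then show ?thesis using l2 s2 e1 by blast
  next
    case False
    then have "even_ord (osucc \<eta>)" using even_ord_or_even_ord_osucc[OF assms(2)] by blast
    then show ?thesis using l1 s1 e1 by blast
  qed
qed

lemma cof_succ_le:
  assumes "is_succ_of a b" "j < k"
  shows "cof b \<le> k"
proof (rule cof_le_of_cofinal_lepoll)
  show "cofinal_in {a} b" using assms(1) is_succ_of_less_le unfolding cofinal_in_def is_succ_of_def by auto
  show "{a} \<lesssim> {..<k}" unfolding lepoll_iff by (rule exI[of _ "\<lambda>_. a"]) (use assms(2) in auto)
qed

section \<open>Conditions\<close>

definition G_clause :: "'o::wellorder \<Rightarrow> ('o \<Rightarrow> 'o) \<Rightarrow> ('o \<Rightarrow> 'o \<Rightarrow> 'o) \<Rightarrow> 'o \<Rightarrow> bool" where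
  "G_clause \<kappa> ls F b \<longleftrightarrow> (\<forall>i<\<kappa>. F b i < ls i) \<and> (\<forall>g<b. eventually_less \<kappa> (F g) (F b)) \<and>
     (\<kappa> < cof b \<longrightarrow> good_point \<kappa> F b)"

lemma mem_G_set_iff:
  "(\<alpha>, F) \<in> G_set lam \<kappa> ls \<longleftrightarrow> {..<\<alpha>} \<lesssim> {..<lam} \<and> (\<forall>b\<le>\<alpha>. G_clause \<kappa> ls F b)"
  unfolding G_set_def G_clause_def by auto

lemma mem_G_set_iff':
  "p \<in> G_set lam \<kappa> ls \<longleftrightarrow> {..<fst p} \<lesssim> {..<lam} \<and> (\<forall>b\<le>fst p. G_clause \<kappa> ls (snd p) b)"
  using mem_G_set_iff[of "fst p" "snd p"] by simp

lemma G_clause_cong: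
  fixes b :: "'o::wellorder"
  assumes "\<forall>g\<le>b. \<forall>i<\<kappa>. F g i = F' g i" "G_clause \<kappa> ls F b"
  shows "G_clause \<kappa> ls F' b"
proof -
  have "eventually_less \<kappa> (F' g) (F' b)" if "g < b" "eventually_less \<kappa> (F g) (F b)" for g
    using that assms(1) unfolding eventually_less_def by (metis order_less_imp_le order_refl)
  moreover have "good_point \<kappa> F' b" if gp: "good_point \<kappa> F b"
  proof -
    obtain A and j :: 'o where A: "cofinal_in A b" "has_otype A (cof b)" "j < \<kappa>"
      "\<forall>i. j \<le> i \<and> i < \<kappa> \<longrightarrow> strict_mono_on A (\<lambda>g. F g i)"
      using gp unfolding good_point_def by blast
    have "\<forall>i. j \<le> i \<and> i < \<kappa> \<longrightarrow> strict_mono_on A (\<lambda>g. F' g i)"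
    proof (intro allI impI)
      fix i assume i: "j \<le> i \<and> i < \<kappa>"
      have "\<forall>g\<in>A. F' g i = F g i" using A(1) assms(1) i unfolding cofinal_in_def by force
      then show "strict_mono_on A (\<lambda>g. F' g i)" using A(4) i unfolding strict_mono_on_def by simp
    qed
    then show ?thesis unfolding good_point_def using A by blast
  qed
  ultimately show ?thesis using assms unfolding G_clause_def by simp
qed

lemma eventually_less_trans_tail:
  assumes "eventually_less \<kappa> f g" "j < \<kappa>" "\<forall>i. j \<le> i \<and> i < \<kappa> \<longrightarrow> g i < h i"
  shows "eventually_less \<kappa> f h"
proof -
  obtain j' where j': "j' < \<kappa>" "\<forall>i. j' \<le> i \<and> i < \<kappa> \<longrightarrow> f i < g i"
    using assms(1) unfolding eventually_less_def by blast
  show ?thesis unfolding eventually_less_def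
    by (rule exI[of _ "max j j'"]) (use j' assms(2,3) in \<open>auto intro: less_trans\<close>)
qed

lemma G_ext_trans: "G_ext \<kappa> r q \<Longrightarrow> G_ext \<kappa> q p \<Longrightarrow> G_ext \<kappa> r p"
  unfolding G_ext_def by (metis order_trans)

lemma restr_apply [simp]: "y < x \<Longrightarrow> restr p x y = p y"
  unfolding restr_def by simp

lemma G_clause_successor:
  assumes clauses: "\<forall>b\<le>\<alpha>. G_clause \<kappa> ls F b" and succ: "is_succ_of \<alpha> \<beta>"
    and top: "\<forall>i<\<kappa>. F \<alpha> i < F \<beta> i \<and> F \<beta> i < ls i" and "i0 < \<kappa>"
  shows "G_clause \<kappa> ls F \<beta>"
  unfolding G_clause_def
proof (intro conjI allI impI)
  fix i assume "i < \<kappa>" then show "F \<beta> i < ls i" using top by simp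
next
  fix g assume "g < \<beta>"
  then have "g \<le> \<alpha>" using is_succ_of_less_le[OF succ] by blast
  have tail: "\<forall>i. i0 \<le> i \<and> i < \<kappa> \<longrightarrow> F \<alpha> i < F \<beta> i" using top by simp
  show "eventually_less \<kappa> (F g) (F \<beta>)"
  proof (cases "g = \<alpha>")
    case True then show ?thesis unfolding eventually_less_def using tail \<open>i0 < \<kappa>\<close> by auto
  next
    case False
    then have "eventually_less \<kappa> (F g) (F \<alpha>)"
      using clauses \<open>g \<le> \<alpha>\<close> unfolding G_clause_def by auto
    then show ?thesis using eventually_less_trans_tail[OF _ \<open>i0 < \<kappa>\<close> tail] by simp
  qed
next
  assume "\<kappa> < cof \<beta>"
  moreover have "cof \<beta> \<le> \<kappa>" using cof_succ_le[OF succ \<open>i0 < \<kappa>\<close>] .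
  ultimately show "good_point \<kappa> F \<beta>" by simp
qed

section \<open>The strategy\<close>

abbreviation top_at :: "'o cond \<Rightarrow> 'o \<Rightarrow> 'o" where
  "top_at q i \<equiv> snd q (fst q) i"

definition top_values :: "('o::wellorder \<Rightarrow> 'o cond) \<Rightarrow> 'o set \<Rightarrow> 'o \<Rightarrow> 'o set" where
  "top_values h S i = (\<lambda>\<eta>. top_at (h \<eta>) i) ` S"

text \<open>At a successor stage the new top lies above the tops of all earlier moves at every
  coordinate i where these are bounded in ls i. For \<xi> < lam this holds on a tail of
  coordinates, so the tops at successor stages increase on a tail: the source of good points.\<close>
definition succ_top :: "('o::wellorder \<Rightarrow> 'o) \<Rightarrow> ('o \<Rightarrow> 'o cond) \<Rightarrow> 'o \<Rightarrow> 'o \<Rightarrow> 'o \<Rightarrow> 'o" where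
  "succ_top ls h \<xi> \<pi> i =
     (if bounded_in (ls i) (top_values h {..<\<xi>} i) then ssup (top_values h {..<\<xi>} i)
      else osucc (top_at (h \<pi>) i))"

text \<open>At stage lam itself the earlier tops need not be bounded in ls i; the tops at the stages
  hc 0, ..., hc i always are once ls i > \<kappa>, and they suffice since hc is cofinal in lam.
  The final fallback only concerns the coordinates below such i.\<close>
definition limit_top :: "('o::wellorder \<Rightarrow> 'o) \<Rightarrow> ('o \<Rightarrow> 'o) \<Rightarrow> ('o \<Rightarrow> 'o cond) \<Rightarrow> 'o \<Rightarrow> 'o \<Rightarrow> 'o" where
  "limit_top ls hc h \<xi> i =
     (let T = top_values h {..<\<xi>} i; D = top_values h ({..<\<xi>} \<inter> hc ` {..i}) i in
      if bounded_in (ls i) T then ssup T else if bounded_in (ls i) D then ssup D else ssup {})"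

definition limit_length :: "('o::wellorder \<Rightarrow> 'o cond) \<Rightarrow> 'o \<Rightarrow> 'o" where
  "limit_length h \<xi> = (LEAST x. \<forall>\<eta><\<xi>. fst (h \<eta>) < x)"

definition limit_seq :: "('o::wellorder \<Rightarrow> 'o cond) \<Rightarrow> 'o \<Rightarrow> 'o \<Rightarrow> 'o \<Rightarrow> 'o" where
  "limit_seq h \<xi> b = snd (h (SOME \<eta>. \<eta> < \<xi> \<and> b \<le> fst (h \<eta>))) b"

definition strategy :: "('o::wellorder \<Rightarrow> 'o) \<Rightarrow> ('o \<Rightarrow> 'o) \<Rightarrow> ('o \<Rightarrow> 'o cond) \<Rightarrow> 'o \<Rightarrow> 'o cond" where
  "strategy ls hc h \<xi> =
    (if \<exists>a. is_succ_of a \<xi> then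
      (let \<pi> = (SOME a. is_succ_of a \<xi>) in
        (osucc (fst (h \<pi>)), (snd (h \<pi>))(osucc (fst (h \<pi>)) := succ_top ls h \<xi> \<pi>)))
    else (limit_length h \<xi>,
      \<lambda>b. if b < limit_length h \<xi> then limit_seq h \<xi> b else limit_top ls hc h \<xi>))"

lemma strategy_successor:
  assumes "is_succ_of \<pi> \<xi>"
  shows "strategy ls hc h \<xi> =
    (osucc (fst (h \<pi>)), (snd (h \<pi>))(osucc (fst (h \<pi>)) := succ_top ls h \<xi> \<pi>))"
proof -
  have "(SOME a. is_succ_of a \<xi>) = \<pi>"
    using assms is_succ_of_unique by (metis someI)
  then show ?thesis unfolding strategy_def using assms by auto
qed

lemma strategy_limit:
  "\<not> (\<exists>a. is_succ_of a \<xi>) \<Longrightarrow> strategy ls hc h \<xi> = (limit_length h \<xi>,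
      \<lambda>b. if b < limit_length h \<xi> then limit_seq h \<xi> b else limit_top ls hc h \<xi>)"
  unfolding strategy_def by simp

section \<open>Successor stages\<close>

text \<open>mu witnesses that lam^+ exists in the type: all lengths of conditions lie below it, so
  their successors and least strict upper bounds exist.\<close>
locale G_setting =
  fixes lam \<kappa> :: "'o::wellorder" and ls :: "'o \<Rightarrow> 'o" and hc :: "'o \<Rightarrow> 'o" and mu :: 'o
  assumes singular: "singular_card lam" and cof_lam: "cof lam = \<kappa>"
    and regular: "\<forall>i<\<kappa>. regular_card (ls i)"
    and ls_mono: "\<forall>i j. i < j \<and> j < \<kappa> \<longrightarrow> ls i < ls j"
    and ls_cofinal: "\<forall>x<lam. \<exists>i<\<kappa>. x < ls i"
    and mu_large: "\<not> {..<mu} \<lesssim> {..<lam}"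
    and hc_cofinal: "\<forall>\<eta><lam. \<exists>i<\<kappa>. \<eta> \<le> hc i" and hc_less: "\<forall>i<\<kappa>. hc i < lam"
begin

abbreviation "G \<equiv> G_set lam \<kappa> ls"

lemma infinite_lam: "infinite {..<lam}"
  using singular by (simp add: singular_card_def)

lemma kappa_less_lam: "\<kappa> < lam"
  using singular cof_lam by (simp add: singular_card_def)

lemma less_mu: "{..<\<alpha>} \<lesssim> {..<lam} \<Longrightarrow> \<alpha> < mu"
proof (rule ccontr)
  assume "{..<\<alpha>} \<lesssim> {..<lam}" "\<not> \<alpha> < mu"
  moreover have "{..<mu} \<lesssim> {..<\<alpha>}" using \<open>\<not> \<alpha> < mu\<close> by (intro subset_imp_lepoll) auto
  ultimately show False using mu_large lepoll_trans by blast
qed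

lemma infinite_cardinal_ls: "i < \<kappa> \<Longrightarrow> is_cardinal (ls i) \<and> infinite {..<ls i}"
  using regular by (simp add: regular_card_def)

lemma osucc_less_ls: "i < \<kappa> \<Longrightarrow> y < ls i \<Longrightarrow> y < osucc y \<and> osucc y < ls i"
proof -
  assume "i < \<kappa>" "y < ls i"
  then obtain x where "y < x" "x < ls i" using infinite_cardinal_limit infinite_cardinal_ls by blast
  then show ?thesis using osucc_bounds[of y x] by auto
qed

lemma ssup_empty_less_ls: "i < \<kappa> \<Longrightarrow> ssup {} < ls i"
proof -
  assume "i < \<kappa>"
  then have "{..<ls i} \<noteq> {}" using infinite_cardinal_ls by (metis finite.emptyI)
  then have "bounded_in (ls i) {}" unfolding bounded_in_def by auto
  then show ?thesis using ssup_bounded_in by blast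
qed

lemma eventually_ls_not_lepoll: "\<zeta> < lam \<Longrightarrow> \<exists>j<\<kappa>. \<forall>i. j \<le> i \<and> i < \<kappa> \<longrightarrow> \<not> {..<ls i} \<lesssim> {..<\<zeta>}"
proof -
  assume "\<zeta> < lam"
  then obtain j where j: "j < \<kappa>" "\<zeta> < ls j" using ls_cofinal by blast
  have "\<not> {..<ls i} \<lesssim> {..<\<zeta>}" if "j \<le> i" "i < \<kappa>" for i
  proof -
    have "ls j \<le> ls i" using ls_mono that by (metis order_le_less)
    then have "\<zeta> < ls i" using j by simp
    then show ?thesis using is_cardinal_not_lepoll_less infinite_cardinal_ls that(2) by blast
  qed
  then show ?thesis using j by blast
qed

lemma top_less_ls: "q \<in> G \<Longrightarrow> i < \<kappa> \<Longrightarrow> top_at q i < ls i"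
  unfolding mem_G_set_iff' G_clause_def by auto

lemma bounded_top_values:
  assumes "i < \<kappa>" "\<not> {..<ls i} \<lesssim> S" "\<forall>\<eta>\<in>S. h \<eta> \<in> G"
  shows "bounded_in (ls i) (top_values h S i)"
proof (rule regular_card_bounded_in)
  show "regular_card (ls i)" using regular assms(1) by simp
  show "top_values h S i \<subseteq> {..<ls i}"
    unfolding top_values_def using assms(1,3) top_less_ls by auto
  have "top_values h S i \<lesssim> S" unfolding top_values_def by (rule image_lepoll)
  then show "\<not> {..<ls i} \<lesssim> top_values h S i" using assms(2) lepoll_trans by blast
qed

lemma G_set_extend:
  assumes "(\<alpha>, F) \<in> G" "\<forall>i<\<kappa>. F \<alpha> i < f i \<and> f i < ls i"
  shows "(osucc \<alpha>, F(osucc \<alpha> := f)) \<in> G \<and> G_ext \<kappa> (osucc \<alpha>, F(osucc \<alpha> := f)) (\<alpha>, F)"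
proof -
  define F' where "F' = F(osucc \<alpha> := f)"
  have len: "{..<\<alpha>} \<lesssim> {..<lam}" and clauses: "\<forall>b\<le>\<alpha>. G_clause \<kappa> ls F b"
    using assms(1) by (auto simp: mem_G_set_iff)
  have succ: "is_succ_of \<alpha> (osucc \<alpha>)" using is_succ_of_osucc[OF less_mu[OF len]] .
  then have below: "F' b = F b" if "b \<le> \<alpha>" for b
    using that unfolding F'_def is_succ_of_def by auto
  have old: "G_clause \<kappa> ls F' b" if "b \<le> \<alpha>" for b
    using clauses that below by (intro G_clause_cong[of b \<kappa> F F']) auto
  obtain i0 where "i0 < \<kappa>" using ls_cofinal kappa_less_lam by blast
  have new: "G_clause \<kappa> ls F' (osucc \<alpha>)"
  proof (rule G_clause_successor[OF _ succ _ \<open>i0 < \<kappa>\<close>])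
    show "\<forall>b\<le>\<alpha>. G_clause \<kappa> ls F' b" using old by blast
    show "\<forall>i<\<kappa>. F' \<alpha> i < F' (osucc \<alpha>) i \<and> F' (osucc \<alpha>) i < ls i"
      using assms(2) below[OF order_refl] by (simp add: F'_def)
  qed
  have "G_clause \<kappa> ls F' b" if "b \<le> osucc \<alpha>" for b
  proof (cases "b = osucc \<alpha>")
    case False
    then show ?thesis using old that is_succ_of_less_le[OF succ] by simp
  qed (use new in simp)
  moreover have "{..<osucc \<alpha>} \<lesssim> {..<lam}"
  proof -
    have "{..<osucc \<alpha>} = insert \<alpha> {..<\<alpha>}"
      using succ is_succ_of_less_le[OF succ] unfolding is_succ_of_def by (auto simp: order_le_less)
    then show ?thesis using insert_lepoll_infinite[OF len infinite_lam] by simp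
  qed
  moreover have "G_ext \<kappa> (osucc \<alpha>, F') (\<alpha>, F)"
    using succ below unfolding G_ext_def is_succ_of_def by auto
  ultimately show ?thesis unfolding F'_def mem_G_set_iff by blast
qed

lemma succ_top_bounds:
  assumes "\<forall>\<eta><\<xi>. p \<eta> \<in> G" "is_succ_of \<pi> \<xi>" "i < \<kappa>"
  shows "top_at (p \<pi>) i < succ_top ls (restr p \<xi>) \<xi> \<pi> i \<and> succ_top ls (restr p \<xi>) \<xi> \<pi> i < ls i"
proof -
  have "\<pi> < \<xi>" using assms(2) unfolding is_succ_of_def by simp
  let ?T = "top_values (restr p \<xi>) {..<\<xi>} i"
  have mem: "top_at (p \<pi>) i \<in> ?T" unfolding top_values_def using \<open>\<pi> < \<xi>\<close> by force
  show ?thesis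
  proof (cases "bounded_in (ls i) ?T")
    case True
    then show ?thesis using ssup_bounded_in[OF True] mem by (simp add: succ_top_def)
  next
    case False
    have "top_at (p \<pi>) i < ls i" using top_less_ls assms(1,3) \<open>\<pi> < \<xi>\<close> by blast
    then show ?thesis
      using False osucc_less_ls[OF assms(3)] \<open>\<pi> < \<xi>\<close> by (simp add: succ_top_def)
  qed
qed

lemma strategy_successor_legal:
  assumes play: "\<forall>\<eta><\<xi>. p \<eta> \<in> G \<and> (\<forall>\<zeta><\<eta>. G_ext \<kappa> (p \<eta>) (p \<zeta>))"
    and succ: "is_succ_of \<pi> \<xi>"
  shows "strategy ls hc (restr p \<xi>) \<xi> \<in> G \<and>
    (\<forall>\<eta><\<xi>. G_ext \<kappa> (strategy ls hc (restr p \<xi>) \<xi>) (p \<eta>))"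
proof -
  have "\<pi> < \<xi>" using succ unfolding is_succ_of_def by simp
  have in_G: "\<forall>\<eta><\<xi>. p \<eta> \<in> G" using play by simp
  obtain \<alpha> F where p\<pi>: "p \<pi> = (\<alpha>, F)" by fastforce
  define f where "f = succ_top ls (restr p \<xi>) \<xi> \<pi>"
  have "strategy ls hc (restr p \<xi>) \<xi> = (osucc \<alpha>, F(osucc \<alpha> := f))"
    using strategy_successor[OF succ] p\<pi> \<open>\<pi> < \<xi>\<close> by (simp add: f_def)
  moreover have "(\<alpha>, F) \<in> G" using in_G \<open>\<pi> < \<xi>\<close> p\<pi> by metis
  moreover have "\<forall>i<\<kappa>. F \<alpha> i < f i \<and> f i < ls i"
    using succ_top_bounds[OF in_G succ] p\<pi> by (simp add: f_def)
  ultimately have new: "strategy ls hc (restr p \<xi>) \<xi> \<in> G \<and>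
      G_ext \<kappa> (strategy ls hc (restr p \<xi>) \<xi>) (p \<pi>)"
    using G_set_extend p\<pi> by simp
  have "G_ext \<kappa> (strategy ls hc (restr p \<xi>) \<xi>) (p \<eta>)" if "\<eta> < \<xi>" for \<eta>
  proof (cases "\<eta> = \<pi>")
    case False
    then have "\<eta> < \<pi>" using is_succ_of_less_le[OF succ that] by simp
    then show ?thesis using play \<open>\<pi> < \<xi>\<close> new G_ext_trans by blast
  qed (use new in simp)
  then show ?thesis using new by simp
qed

lemma strategy_successor_top_above:
  assumes "\<forall>\<eta><\<zeta>. p \<eta> \<in> G" "is_succ_of \<pi> \<zeta>" "i < \<kappa>" "\<not> {..<ls i} \<lesssim> {..<\<zeta>}" "\<eta> < \<zeta>"
  shows "top_at (p \<eta>) i < top_at (strategy ls hc (restr p \<zeta>) \<zeta>) i"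
proof -
  let ?T = "top_values (restr p \<zeta>) {..<\<zeta>} i"
  have bdd: "bounded_in (ls i) ?T" using bounded_top_values[OF assms(3,4)] assms(1) by simp
  have "top_at (p \<eta>) i \<in> ?T" using assms(5) unfolding top_values_def by force
  then have "top_at (p \<eta>) i < succ_top ls (restr p \<zeta>) \<zeta> \<pi> i"
    using ssup_bounded_in[OF bdd] bdd by (simp add: succ_top_def)
  then show ?thesis using strategy_successor[OF assms(2)] by simp
qed

end

section \<open>Limit stages\<close>

locale G_limit_stage = G_setting lam \<kappa> ls hc mu for lam \<kappa> :: "'o::wellorder" and ls hc mu +
  fixes p :: "'o \<Rightarrow> 'o cond" and \<xi> :: 'o
  assumes stage_le_lam: "\<xi> \<le> lam"
    and play: "\<forall>\<eta><\<xi>. p \<eta> \<in> G \<and> (\<forall>\<zeta><\<eta>. G_ext \<kappa> (p \<eta>) (p \<zeta>))"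
    and follows: "\<forall>\<eta><\<xi>. even_ord \<eta> \<longrightarrow> p \<eta> = strategy ls hc (restr p \<eta>) \<eta>"
    and limit: "\<not> (\<exists>a. is_succ_of a \<xi>)"
begin

definition len :: 'o where
  "len = limit_length (restr p \<xi>) \<xi>"

definition new_top :: "'o \<Rightarrow> 'o" where
  "new_top = limit_top ls hc (restr p \<xi>) \<xi>"

definition seq :: "'o \<Rightarrow> 'o \<Rightarrow> 'o" where
  "seq b = (if b < len then limit_seq (restr p \<xi>) \<xi> b else new_top)"

lemma strategy_eq: "strategy ls hc (restr p \<xi>) \<xi> = (len, seq)"
  using strategy_limit[OF limit] unfolding len_def new_top_def seq_def[abs_def] by simp

lemma seq_len: "seq len = new_top"
  by (simp add: seq_def)

lemma play_in_G: "\<eta> < \<xi> \<Longrightarrow> p \<eta> \<in> G"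
  using play by blast

lemma fst_play_mono: "\<eta> \<le> \<eta>' \<Longrightarrow> \<eta>' < \<xi> \<Longrightarrow> fst (p \<eta>) \<le> fst (p \<eta>')"
  using play unfolding G_ext_def by (metis order_le_less)

lemma len_greater: "\<eta> < \<xi> \<Longrightarrow> fst (p \<eta>) < len"
proof -
  assume "\<eta> < \<xi>"
  have "\<forall>\<eta><\<xi>. fst (restr p \<xi> \<eta>) < mu"
    using play_in_G less_mu unfolding mem_G_set_iff' by simp
  then have "\<forall>\<eta><\<xi>. fst (restr p \<xi> \<eta>) < len"
    unfolding len_def limit_length_def by (rule LeastI)
  then show ?thesis using \<open>\<eta> < \<xi>\<close> by simp
qed

lemma len_least: "\<gamma> < len \<Longrightarrow> \<exists>\<eta><\<xi>. \<gamma> \<le> fst (p \<eta>)"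
proof -
  assume "\<gamma> < len"
  then have "\<not> (\<forall>\<eta><\<xi>. fst (restr p \<xi> \<eta>) < \<gamma>)"
    unfolding len_def limit_length_def by (rule not_less_Least)
  then show ?thesis by (auto simp: not_less)
qed

lemma seq_eq: "\<eta> < \<xi> \<Longrightarrow> b \<le> fst (p \<eta>) \<Longrightarrow> i < \<kappa> \<Longrightarrow> seq b i = snd (p \<eta>) b i"
proof -
  assume \<eta>: "\<eta> < \<xi>" "b \<le> fst (p \<eta>)" "i < \<kappa>"
  define \<eta>' where "\<eta>' = (SOME \<eta>. \<eta> < \<xi> \<and> b \<le> fst (restr p \<xi> \<eta>))"
  have "\<eta>' < \<xi> \<and> b \<le> fst (p \<eta>')"
    using someI[of "\<lambda>\<eta>. \<eta> < \<xi> \<and> b \<le> fst (restr p \<xi> \<eta>)" \<eta>] \<eta> unfolding \<eta>'_def by auto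
  moreover have "b < len" using len_greater[OF \<eta>(1)] \<eta>(2) by simp
  then have "seq b = snd (p \<eta>') b"
    using calculation unfolding seq_def limit_seq_def \<eta>'_def[symmetric] by simp
  moreover have "snd (p \<eta>') b i = snd (p \<eta>) b i"
    using play \<eta> calculation unfolding G_ext_def by (metis linorder_cases)
  ultimately show ?thesis by simp
qed

lemma G_clause_below_len: "b < len \<Longrightarrow> G_clause \<kappa> ls seq b"
proof -
  assume "b < len"
  then obtain \<eta> where \<eta>: "\<eta> < \<xi>" "b \<le> fst (p \<eta>)" using len_least by blast
  have "G_clause \<kappa> ls (snd (p \<eta>)) b" using play_in_G[OF \<eta>(1)] \<eta>(2) unfolding mem_G_set_iff' by blast
  then show ?thesis using seq_eq \<eta> by (intro G_clause_cong[of b \<kappa> "snd (p \<eta>)" seq]) auto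
qed

lemma new_top_less_ls: "i < \<kappa> \<Longrightarrow> new_top i < ls i"
  unfolding new_top_def limit_top_def Let_def using ssup_bounded_in ssup_empty_less_ls by auto

lemma new_top_above_below_lam:
  assumes "\<xi> < lam" "\<eta> < \<xi>"
  shows "\<exists>j<\<kappa>. \<forall>i. j \<le> i \<and> i < \<kappa> \<longrightarrow> top_at (p \<eta>) i < new_top i"
proof -
  obtain j where j: "j < \<kappa>" "\<forall>i. j \<le> i \<and> i < \<kappa> \<longrightarrow> \<not> {..<ls i} \<lesssim> {..<\<xi>}"
    using eventually_ls_not_lepoll[OF assms(1)] by blast
  have "top_at (p \<eta>) i < new_top i" if i: "j \<le> i" "i < \<kappa>" for i
  proof -
    let ?T = "top_values (restr p \<xi>) {..<\<xi>} i"
    have bdd: "bounded_in (ls i) ?T" using bounded_top_values[OF i(2)] j i play_in_G by simp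
    have "top_at (p \<eta>) i \<in> ?T" unfolding top_values_def using assms(2) by force
    then show ?thesis using ssup_bounded_in[OF bdd] bdd by (simp add: new_top_def limit_top_def)
  qed
  then show ?thesis using j(1) by blast
qed

lemma new_top_above_at_lam:
  assumes "\<xi> = lam" "i1 < \<kappa>"
  shows "\<exists>j<\<kappa>. \<forall>i. j \<le> i \<and> i < \<kappa> \<longrightarrow> top_at (p (hc i1)) i < new_top i"
proof -
  obtain i0 where i0: "i0 < \<kappa>" "\<forall>i. i0 \<le> i \<and> i < \<kappa> \<longrightarrow> \<not> {..<ls i} \<lesssim> {..<\<kappa>}"
    using eventually_ls_not_lepoll[OF kappa_less_lam] by blast
  have "top_at (p (hc i1)) i < new_top i" if i: "max i0 i1 \<le> i" "i < \<kappa>" for i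
  proof -
    let ?T = "top_values (restr p \<xi>) {..<\<xi>} i"
    let ?D = "top_values (restr p \<xi>) ({..<\<xi>} \<inter> hc ` {..i}) i"
    have "{..<\<xi>} \<inter> hc ` {..i} \<lesssim> {..<\<kappa>}"
    proof -
      have "{..<\<xi>} \<inter> hc ` {..i} \<lesssim> {..i}" by (meson image_lepoll inf_le2 lepoll_trans subset_imp_lepoll)
      also have "{..i} \<lesssim> {..<\<kappa>}" using i(2) by (intro subset_imp_lepoll) auto
      finally show ?thesis .
    qed
    then have "\<not> {..<ls i} \<lesssim> {..<\<xi>} \<inter> hc ` {..i}" using i0 i lepoll_trans by fastforce
    then have bdd: "bounded_in (ls i) ?D" using bounded_top_values[OF i(2)] play_in_G by simp
    have "hc i1 < \<xi>" using hc_less assms by simp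
    then have "top_at (p (hc i1)) i \<in> ?D" "top_at (p (hc i1)) i \<in> ?T"
      unfolding top_values_def using i(1) by force+
    then show ?thesis using ssup_bounded_in[of "ls i" ?T] ssup_bounded_in[OF bdd] bdd
      by (simp add: new_top_def limit_top_def Let_def)
  qed
  then show ?thesis using i0(1) assms(2) by (metis max_less_iff_conj)
qed

lemma new_top_dominates:
  assumes "\<eta> < \<xi>"
  shows "\<exists>\<eta>'. \<eta> \<le> \<eta>' \<and> \<eta>' < \<xi> \<and> (\<exists>j<\<kappa>. \<forall>i. j \<le> i \<and> i < \<kappa> \<longrightarrow> top_at (p \<eta>') i < new_top i)"
proof (cases "\<xi> < lam")
  case True
  then show ?thesis using new_top_above_below_lam assms by blast
next
  case False
  then have "\<xi> = lam" using stage_le_lam by simp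
  then obtain i1 where "i1 < \<kappa>" "\<eta> \<le> hc i1" using hc_cofinal assms by blast
  moreover have "hc i1 < \<xi>" using hc_less \<open>\<xi> = lam\<close> calculation by simp
  ultimately show ?thesis using new_top_above_at_lam[OF \<open>\<xi> = lam\<close>] by blast
qed

lemma eventually_less_new_top: "g < len \<Longrightarrow> eventually_less \<kappa> (seq g) new_top"
proof -
  assume "g < len"
  then obtain \<eta> where \<eta>: "\<eta> < \<xi>" "g \<le> fst (p \<eta>)" using len_least by blast
  obtain \<eta>' j where \<eta>': "\<eta> \<le> \<eta>'" "\<eta>' < \<xi>" "j < \<kappa>"
    and above: "\<forall>i. j \<le> i \<and> i < \<kappa> \<longrightarrow> top_at (p \<eta>') i < new_top i"
    using new_top_dominates[OF \<eta>(1)] by blast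
  define a where "a = fst (p \<eta>')"
  have "g \<le> a" using \<eta>(2) fst_play_mono[OF \<eta>'(1,2)] by (simp add: a_def)
  have tail: "\<forall>i. j \<le> i \<and> i < \<kappa> \<longrightarrow> seq a i < new_top i"
    using above seq_eq[OF \<eta>'(2)] by (simp add: a_def)
  show ?thesis
  proof (cases "g = a")
    case True
    then show ?thesis using tail \<open>j < \<kappa>\<close> unfolding eventually_less_def by blast
  next
    case False
    then have "g < a" using \<open>g \<le> a\<close> by simp
    moreover have "a < len" using len_greater[OF \<eta>'(2)] by (simp add: a_def)
    ultimately have "eventually_less \<kappa> (seq g) (seq a)"
      using G_clause_below_len unfolding G_clause_def by blast
    then show ?thesis using eventually_less_trans_tail \<open>j < \<kappa>\<close> tail by blast
  qed
qed

lemma cof_len_at_lam: "\<xi> = lam \<Longrightarrow> cof len \<le> \<kappa>"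
proof -
  assume "\<xi> = lam"
  define C where "C = (\<lambda>i. fst (p (hc i))) ` {..<\<kappa>}"
  have "cofinal_in C len" unfolding cofinal_in_def
  proof (intro conjI allI impI)
    show "C \<subseteq> {..<len}" unfolding C_def using len_greater hc_less \<open>\<xi> = lam\<close> by auto
    fix x assume "x < len"
    then obtain \<eta> where \<eta>: "\<eta> < \<xi>" "x \<le> fst (p \<eta>)" using len_least by blast
    then obtain i where i: "i < \<kappa>" "\<eta> \<le> hc i" using hc_cofinal \<open>\<xi> = lam\<close> by blast
    then have "fst (p \<eta>) \<le> fst (p (hc i))" using fst_play_mono hc_less \<open>\<xi> = lam\<close> by simp
    then show "\<exists>a\<in>C. x \<le> a" unfolding C_def using i \<eta> by force
  qed
  moreover have "C \<lesssim> {..<\<kappa>}" unfolding C_def by (rule image_lepoll)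
  ultimately show ?thesis by (rule cof_le_of_cofinal_lepoll)
qed

definition succ_stage_lengths :: "'o set" where
  "succ_stage_lengths = {fst (p \<zeta>) | \<zeta>. \<zeta> < \<xi> \<and> even_ord \<zeta> \<and> (\<exists>a. is_succ_of a \<zeta>)}"

lemma cofinal_in_succ_stage_lengths: "cofinal_in succ_stage_lengths len"
  unfolding cofinal_in_def
proof (intro conjI allI impI)
  show "succ_stage_lengths \<subseteq> {..<len}"
    unfolding succ_stage_lengths_def using len_greater by auto
  fix x assume "x < len"
  then obtain \<eta> where \<eta>: "\<eta> < \<xi>" "x \<le> fst (p \<eta>)" using len_least by blast
  obtain \<zeta> where \<zeta>: "\<eta> \<le> \<zeta>" "\<zeta> < \<xi>" "even_ord \<zeta>" "\<exists>a. is_succ_of a \<zeta>"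
    using even_successor_between[OF limit \<eta>(1)] by blast
  have "x \<le> fst (p \<zeta>)" using fst_play_mono[OF \<zeta>(1,2)] \<eta>(2) by simp
  then show "\<exists>a\<in>succ_stage_lengths. x \<le> a" unfolding succ_stage_lengths_def using \<zeta> by blast
qed

lemma strict_mono_on_succ_stage_lengths:
  assumes "\<xi> < lam"
  shows "\<exists>j<\<kappa>. \<forall>i. j \<le> i \<and> i < \<kappa> \<longrightarrow> strict_mono_on succ_stage_lengths (\<lambda>g. seq g i)"
proof -
  obtain j where j: "j < \<kappa>" "\<forall>i. j \<le> i \<and> i < \<kappa> \<longrightarrow> \<not> {..<ls i} \<lesssim> {..<\<xi>}"
    using eventually_ls_not_lepoll[OF assms] by blast
  have "seq r i < seq s i"
    if i: "j \<le> i" "i < \<kappa>" and rs: "r \<in> succ_stage_lengths" "s \<in> succ_stage_lengths" "r < s"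
    for i r s
  proof -
    obtain \<zeta> where \<zeta>: "r = fst (p \<zeta>)" "\<zeta> < \<xi>" using rs(1) unfolding succ_stage_lengths_def by blast
    obtain \<zeta>' \<pi> where \<zeta>': "s = fst (p \<zeta>')" "\<zeta>' < \<xi>" "even_ord \<zeta>'" "is_succ_of \<pi> \<zeta>'"
      using rs(2) unfolding succ_stage_lengths_def by blast
    have "\<zeta> < \<zeta>'" using fst_play_mono[of \<zeta>' \<zeta>] \<zeta> \<zeta>' rs(3) by (meson leD not_le_imp_less)
    have "{..<\<zeta>'} \<lesssim> {..<\<xi>}" using \<zeta>'(2) by (intro subset_imp_lepoll) auto
    then have "\<not> {..<ls i} \<lesssim> {..<\<zeta>'}" using j i lepoll_trans by blast
    then have "top_at (p \<zeta>) i < top_at (strategy ls hc (restr p \<zeta>') \<zeta>') i"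
      using strategy_successor_top_above[OF _ \<zeta>'(4) i(2) _ \<open>\<zeta> < \<zeta>'\<close>] play_in_G \<zeta>'(2) by simp
    also have "strategy ls hc (restr p \<zeta>') \<zeta>' = p \<zeta>'" using follows \<zeta>'(2,3) by simp
    finally show ?thesis using seq_eq \<zeta> \<zeta>' i(2) by simp
  qed
  then show ?thesis using j(1) unfolding strict_mono_on_def by blast
qed

lemma good_point_below_lam: "\<xi> < lam \<Longrightarrow> good_point \<kappa> seq len"
proof -
  assume "\<xi> < lam"
  obtain A where A: "A \<subseteq> succ_stage_lengths" "cofinal_in A len" "has_otype A (cof len)"
    using cofinal_subset_has_otype_cof[OF cofinal_in_succ_stage_lengths] by blast
  obtain j where "j < \<kappa>" "\<forall>i. j \<le> i \<and> i < \<kappa> \<longrightarrow> strict_mono_on succ_stage_lengths (\<lambda>g. seq g i)"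
    using strict_mono_on_succ_stage_lengths[OF \<open>\<xi> < lam\<close>] by blast
  then show ?thesis
    unfolding good_point_def using A monotone_on_subset by blast
qed

lemma len_lepoll: "{..<len} \<lesssim> {..<lam}"
proof -
  have "{..<len} \<subseteq> (\<Union>\<eta>\<in>{..<\<xi>}. insert (fst (p \<eta>)) {..<fst (p \<eta>)})"
  proof
    fix x assume "x \<in> {..<len}"
    then have "x < len" by simp
    then obtain \<eta> where "\<eta> < \<xi>" "x \<le> fst (p \<eta>)" using len_least by blast
    then have "x \<in> insert (fst (p \<eta>)) {..<fst (p \<eta>)}" by (auto simp: order_le_less)
    then show "x \<in> (\<Union>\<eta>\<in>{..<\<xi>}. insert (fst (p \<eta>)) {..<fst (p \<eta>)})"
      using \<open>\<eta> < \<xi>\<close> by blast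
  qed
  then have "{..<len} \<lesssim> (\<Union>\<eta>\<in>{..<\<xi>}. insert (fst (p \<eta>)) {..<fst (p \<eta>)})"
    by (rule subset_imp_lepoll)
  also have "\<dots> \<lesssim> {..<lam}"
  proof (rule UN_lepoll_infinite)
    show "{..<\<xi>} \<lesssim> {..<lam}" using stage_le_lam by (intro subset_imp_lepoll) auto
    show "infinite {..<lam}" by (rule infinite_lam)
    fix \<eta> assume "\<eta> \<in> {..<\<xi>}"
    then have "p \<eta> \<in> G" using play_in_G by simp
    then have "{..<fst (p \<eta>)} \<lesssim> {..<lam}" unfolding mem_G_set_iff' by blast
    then show "insert (fst (p \<eta>)) {..<fst (p \<eta>)} \<lesssim> {..<lam}"
      using infinite_lam by (rule insert_lepoll_infinite)
  qed
  finally show ?thesis .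
qed

lemma strategy_limit_legal:
  "strategy ls hc (restr p \<xi>) \<xi> \<in> G \<and> (\<forall>\<eta><\<xi>. G_ext \<kappa> (strategy ls hc (restr p \<xi>) \<xi>) (p \<eta>))"
proof -
  have "G_clause \<kappa> ls seq len"
  proof -
    have "good_point \<kappa> seq len" if "\<kappa> < cof len"
      using good_point_below_lam cof_len_at_lam stage_le_lam that by force
    then show ?thesis
      unfolding G_clause_def using seq_len new_top_less_ls eventually_less_new_top by simp
  qed
  then have "(len, seq) \<in> G"
    unfolding mem_G_set_iff using len_lepoll G_clause_below_len order_le_less by blast
  moreover have "G_ext \<kappa> (len, seq) (p \<eta>)" if "\<eta> < \<xi>" for \<eta>
    unfolding G_ext_def using len_greater[OF that] seq_eq[OF that] by simp
  ultimately show ?thesis using strategy_eq by simp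
qed

end

context G_setting
begin

theorem strat_closed_G: "strat_closed lam G (G_ext \<kappa>)"
  unfolding strat_closed_def
proof (intro exI[of _ "strategy ls hc"] allI impI, elim conjE)
  fix p \<xi>
  assume stage: "\<xi> \<le> lam" and "even_ord \<xi>"
    and play: "\<forall>\<eta><\<xi>. p \<eta> \<in> G \<and> (\<forall>\<zeta><\<eta>. G_ext \<kappa> (p \<eta>) (p \<zeta>))"
    and follows: "\<forall>\<eta><\<xi>. even_ord \<eta> \<longrightarrow> p \<eta> = strategy ls hc (restr p \<eta>) \<eta>"
  \<comment> \<open>the move is legal at every stage, even or not\<close>
  show "strategy ls hc (restr p \<xi>) \<xi> \<in> G \<and>
      (\<forall>\<eta><\<xi>. G_ext \<kappa> (strategy ls hc (restr p \<xi>) \<xi>) (p \<eta>))"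
  proof (cases "\<exists>a. is_succ_of a \<xi>")
    case True
    then show ?thesis using strategy_successor_legal[OF play] by blast
  next
    case False
    interpret G_limit_stage lam \<kappa> ls hc mu p \<xi>
      using stage play follows False by unfold_locales
    show ?thesis by (rule strategy_limit_legal)
  qed
qed

end

theorem proposition2p10:
  fixes lam \<kappa> :: "'o::wellorder" and ls :: "'o \<Rightarrow> 'o"
  assumes "singular_card lam"
    and "cof lam = \<kappa>"
    and "\<forall>i<\<kappa>. regular_card (ls i)"
    and "\<forall>i j. i < j \<and> j < \<kappa> \<longrightarrow> ls i < ls j"
    and "\<forall>i<\<kappa>. ls i < lam"
    and "\<forall>x<lam. \<exists>i<\<kappa>. x < ls i"
    and "\<exists>\<mu>::'o. \<not> ({..<\<mu>} \<lesssim> {..<lam})"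
  shows "strat_closed lam (G_set lam \<kappa> ls) (G_ext \<kappa>)"
proof -
  obtain mu :: 'o where "\<not> {..<mu} \<lesssim> {..<lam}" using assms(7) by blast
  moreover obtain hc where "\<forall>\<eta><lam. \<exists>i<\<kappa>. \<eta> \<le> hc i" "\<forall>i<\<kappa>. hc i < lam"
    using ex_cofinal_map_cof[of lam] assms(2) by blast
  ultimately interpret G_setting lam \<kappa> ls hc mu
    using assms(1-4,6) by unfold_locales
  show ?thesis by (rule strat_closed_G)
qed

end
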